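(* Let $\mathcal{Z}$ be a data space and $\ell:\mathbb{R}^d\times\mathcal{Z}\to\mathbb{R}$ a loss, differentiable in $w$, which is $L$-Lipschitz in $w$ ($|\ell(w,z)-\ell(w',z)|\le L\|w-w'\|$) and gradient Lipschitz: $\|\nabla\ell(w,z)-\nabla\ell(w',z)\|\le G\|w-w'\|$ for all $w,w'\in\mathbb{R}^d$, $z\in\mathcal{Z}$, with $G<\infty$. Fix $T\in\mathbb{N}$ and $R>0$. Given $S=(z_1,\dots,z_n)\in\mathcal{Z}^n$ and an initial point $w_0$, consider projected SGD $$w_{k+1}=\Pi_R\big[w_k-\eta_k\nabla\ell(w_k,z_{i_{k+1}})\big],$$ where $i_1,i_2,\dots$ are independent indices drawn uniformly from $\{1,\dots,n\}$ (this is the algorithmic randomness $U$), $\Pi_R$ is the Euclidean projection onto the ball of radius $R$ centred at $0$, and the step sizes satisfy $\eta_k\le c/k$ for some $c<1/G$. Then the algorithm returning the trajectory $\mathcal{W}_{S,U}=\{w_1,\dots,w_T\}$ is trajectory-stable with stability parameter $$\beta_n=\frac{4LR}{n-1}\Big(\frac{L}{GR}\Big)^{\frac1{Gc+1}}\sum_{k=1}^T k^{\frac{Gc}{Gc+1}}.$$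
   Context: A data-dependent selection of $\mathcal{W}_{S,U}$ is a deterministic map $\omega:\mathrm{CL}(\mathbb{R}^d)\times\mathcal{Z}^n\to\mathbb{R}^d$ ($\mathrm{CL}(\mathbb{R}^d)$ = closed subsets of $\mathbb{R}^d$) with $\omega(\mathcal{W}_{S,U},S)\in\mathcal{W}_{S,U}$ almost surely w.r.t. the joint law of $(S,\mathcal{W}_{S,U})$. Trajectory stability: the set-valued algorithm $S,U\mapsto\mathcal{W}_{S,U}$ (also written $\mathcal{W}_S$) is $\beta_n$-trajectory-stable if for every $J\in\mathbb{N}^\star$ and every data-dependent selection $\omega$ there is a map $\omega':\mathrm{CL}(\mathbb{R}^d)\times\mathbb{R}^d\to\mathbb{R}^d$ such that (a) almost surely, for all $S$ and $w$, $\omega'(\mathcal{W}_S,w)\in\mathcal{W}_S$; (b) for all $z\in\mathcal{Z}$ and all $S,S'\in\mathcal{Z}^n$ differing in exactly $J$ coordinates, $\mathbb{E}_U\big[|\ell(\omega(\mathcal{W}_{S,U},S),z)-\ell(\omega'(\mathcal{W}_{S',U},\omega(\mathcal{W}_{S,U},S)),z)|\big]\le\beta_n J$. *)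

theory Defs
  imports "HOL-Analysis.Analysis"
begin

definition proj_ball :: "real \<Rightarrow> 'a::euclidean_space \<Rightarrow> 'a" where
  "proj_ball R x = closest_point (cball 0 R) x"

text \<open>S is the sample (a list of length n), idx k is the
  index i_k (in 0..n-1) drawn at step k (k >= 1), eta k the step size of step k.
  psgd ... 0 = w0 and
  w_k = Pi_R [ w_(k-1) - eta_k * grad l (w_(k-1), z_(i_k)) ].\<close>
fun psgd :: "('a::euclidean_space \<Rightarrow> 'z \<Rightarrow> 'a) \<Rightarrow> (nat \<Rightarrow> real) \<Rightarrow> real \<Rightarrow> 'a
             \<Rightarrow> 'z list \<Rightarrow> (nat \<Rightarrow> nat) \<Rightarrow> nat \<Rightarrow> 'a" where
  "psgd gr eta R w0 S idx 0 = w0"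
| "psgd gr eta R w0 S idx (Suc k) =
     proj_ball R (psgd gr eta R w0 S idx k
                  - eta (Suc k) *\<^sub>R gr (psgd gr eta R w0 S idx k) (S ! idx (Suc k)))"

definition traj :: "('a::euclidean_space \<Rightarrow> 'z \<Rightarrow> 'a) \<Rightarrow> (nat \<Rightarrow> real) \<Rightarrow> real \<Rightarrow> 'a
             \<Rightarrow> nat \<Rightarrow> 'z list \<Rightarrow> (nat \<Rightarrow> nat) \<Rightarrow> 'a set" where
  "traj gr eta R w0 T S idx = (\<lambda>k. psgd gr eta R w0 S idx k) ` {1..T}"

text \<open>Only i_1..i_T influence the trajectory, so U ranges over
  the finite set of maps {1..T} -> {0..<n}, each with probability 1/n^T.\<close>
definition idx_space :: "nat \<Rightarrow> nat \<Rightarrow> (nat \<Rightarrow> nat) set" where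
  "idx_space n T = PiE {1..T} (\<lambda>_. {..<n})"

definition expect_U :: "nat \<Rightarrow> nat \<Rightarrow> ((nat \<Rightarrow> nat) \<Rightarrow> real) \<Rightarrow> real" where
  "expect_U n T f = (\<Sum>u\<in>idx_space n T. f u) / real n ^ T"

definition ndiff :: "'z list \<Rightarrow> 'z list \<Rightarrow> nat" where
  "ndiff S S' = card {j. j < length S \<and> S ! j \<noteq> S' ! j}"

definition trajectory_stable ::
  "nat \<Rightarrow> ('u set) \<Rightarrow> (('u \<Rightarrow> real) \<Rightarrow> real) \<Rightarrow> ('a \<Rightarrow> 'z \<Rightarrow> real)
   \<Rightarrow> ('z list \<Rightarrow> 'u \<Rightarrow> 'a set) \<Rightarrow> real \<Rightarrow> bool" where
  "trajectory_stable n Us EU l W beta \<longleftrightarrow>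
     (\<forall>J::nat. J \<ge> 1 \<longrightarrow>
       (\<forall>\<omega> :: 'a set \<Rightarrow> 'z list \<Rightarrow> 'a.
          (\<forall>S u. length S = n \<longrightarrow> u \<in> Us \<longrightarrow> \<omega> (W S u) S \<in> W S u) \<longrightarrow>
          (\<exists>\<omega>' :: 'a set \<Rightarrow> 'a \<Rightarrow> 'a.
             (\<forall>S u w. length S = n \<longrightarrow> u \<in> Us \<longrightarrow> \<omega>' (W S u) w \<in> W S u) \<and>
             (\<forall>z S S'. length S = n \<longrightarrow> length S' = n \<longrightarrow> ndiff S S' = J \<longrightarrow>
                EU (\<lambda>u. \<bar>l (\<omega> (W S u) S) z - l (\<omega>' (W S' u) (\<omega> (W S u) S)) z\<bar>)
                  \<le> beta * real J))))"

end

theory Submission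
  imports Defs
begin

text \<open>
  Run SGD on S and S' with the same indices u, let D be the set of positions where the samples
  differ and p = |D|/n. If none of the first t0 indices lies in D, both runs coincide up to
  time t0; afterwards step t expands their distance by at most the factor 1 + eta(t) G,
  which is at most 1 + q/t for q = G c, plus 2 eta(t) L if a differing example is drawn,
  which has probability p. With the union bound for the first t0 steps and the diameter 2R of
  the ball, the expected distance at time k is at most
  2 R t0 p + (2 p L / G) ((1 + q/(t0+1)) \<cdots> (1 + q/k) - 1).
  The product is at most ((2k+1)/(2 t0+1)) powr q, and t0 = floor tau with
  tau = (L/(G R)) powr (1/(q+1)) * k powr (q/(q+1)) makes the bound 4 R p tau. Choosing
  omega' as the nearest point of the other trajectory, the loss gap is at most L times the sum
  of these distances, and p = J/n \<le> J/(n - 1).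
\<close>

lemma artanh_ge_self:
  fixes y :: real
  assumes "0 \<le> y" "y < 1"
  shows "y \<le> artanh y"
proof -
  have "artanh 0 - 0 \<le> artanh y - y"
  proof (rule DERIV_nonneg_imp_nondecreasing[OF assms(1)])
    fix x :: real assume x: "0 \<le> x" "x \<le> y"
    then have x2: "x\<^sup>2 < 1"
      using assms by (simp add: abs_square_less_1)
    then have "((\<lambda>y. artanh y - y) has_real_derivative 1 / (1 - x\<^sup>2) - 1) (at x)"
      using x assms by (auto intro!: derivative_eq_intros)
    moreover have "0 \<le> 1 / (1 - x\<^sup>2) - 1"
      using x2 by (simp add: field_simps)
    ultimately show "\<exists>d. ((\<lambda>y. artanh y - y) has_real_derivative d) (at x) \<and> 0 \<le> d"
      by blast
  qed
  then show ?thesis by simp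
qed

lemma one_plus_div_le_powr:
  fixes q r :: real
  assumes "0 \<le> q" "1 < 2 * r"
  shows "1 + q / r \<le> ((2 * r + 1) / (2 * r - 1)) powr q"
proof -
  have frac: "(1 + 1 / (2 * r)) / (1 - 1 / (2 * r)) = (2 * r + 1) / (2 * r - 1)"
    using assms by (simp add: field_simps)
  have "1 / r \<le> 2 * artanh (1 / (2 * r))"
    using artanh_ge_self[of "1 / (2 * r)"] assms by (simp add: field_simps)
  also have "\<dots> = ln ((2 * r + 1) / (2 * r - 1))"
    using frac by (simp add: artanh_def)
  finally have ln_ge: "1 / r \<le> ln ((2 * r + 1) / (2 * r - 1))" .
  have "1 + q / r \<le> exp (q * (1 / r))"
    using exp_ge_add_one_self[of "q / r"] by simp
  also have "\<dots> \<le> exp (q * ln ((2 * r + 1) / (2 * r - 1)))"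
    using ln_ge assms by (intro exp_mono mult_left_mono) auto
  also have "\<dots> = ((2 * r + 1) / (2 * r - 1)) powr q"
    using assms by (simp add: powr_def mult.commute)
  finally show ?thesis .
qed

lemma prod_one_plus_div_le_powr:
  fixes q :: real
  assumes "0 \<le> q" "t \<le> k"
  shows "(\<Prod>r\<in>{t<..k}. 1 + q / real r) \<le> ((2 * real k + 1) / (2 * real t + 1)) powr q"
  using assms(2)
proof (induction k rule: dec_induct)
  case base
  then show ?case by simp
next
  case (step k)
  have "{t<..Suc k} = insert (Suc k) {t<..k}"
    using step by auto
  then have "(\<Prod>r\<in>{t<..Suc k}. 1 + q / real r)
      = (1 + q / real (Suc k)) * (\<Prod>r\<in>{t<..k}. 1 + q / real r)"
    by simp
  also have "\<dots> \<le> ((2 * real k + 3) / (2 * real k + 1)) powr q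
                  * ((2 * real k + 1) / (2 * real t + 1)) powr q"
    using one_plus_div_le_powr[OF assms(1), of "real (Suc k)"] step assms(1)
    by (intro mult_mono) (auto intro!: prod_nonneg simp: add.commute add.left_commute)
  also have "\<dots> = ((2 * real k + 3) / (2 * real k + 1) * ((2 * real k + 1) / (2 * real t + 1))) powr q"
    by (subst powr_mult) auto
  also have "(2 * real k + 3) / (2 * real k + 1) * ((2 * real k + 1) / (2 * real t + 1))
      = (2 * real (Suc k) + 1) / (2 * real t + 1)"
    by (simp add: add_pos_pos)
  finally show ?case .
qed

lemma one_plus_powr_le:
  fixes x q :: real
  assumes "0 \<le> x" "0 \<le> q" "q \<le> 1"
  shows "(1 + x) powr q \<le> 1 + q * x"
  using Youngs_inequality_0[of q "1 - q" "1 + x" 1] assms by (simp add: algebra_simps)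

lemma floor_mul_powr_le:
  fixes \<tau> q :: real
  assumes "0 \<le> \<tau>" "0 \<le> q" "q \<le> 1"
  shows "\<tau> * (\<tau> / (real (nat \<lfloor>\<tau>\<rfloor>) + 1/2)) powr q \<le> 2 * \<tau> - real (nat \<lfloor>\<tau>\<rfloor>)"
proof -
  define t where "t = real (nat \<lfloor>\<tau>\<rfloor>)"
  have t: "0 \<le> t" "t \<le> \<tau>" "\<tau> < t + 1"
    using assms(1) unfolding t_def by linarith+
  define \<rho> where "\<rho> = \<tau> / (t + 1/2)"
  show ?thesis
  proof (cases "\<rho> \<le> 1")
    case True
    then have "\<rho> powr q \<le> 1"
      using assms t by (intro powr_le1) (auto simp: \<rho>_def)
    then show ?thesis
      using assms t mult_left_le[of "\<rho> powr q" \<tau>] by (simp add: \<rho>_def flip: t_def)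
  next
    case False
    then have "\<rho> powr q \<le> \<rho>"
      using powr_mono[OF assms(3), of \<rho>] by simp
    moreover have "\<tau> * \<rho> \<le> 2 * \<tau> - t"
    proof -
      have "(\<tau> - t)\<^sup>2 \<le> \<tau> - t"
        using t by (simp add: power2_eq_square mult_left_le_one_le)
      then have "\<tau> * \<tau> \<le> (2 * \<tau> - t) * (t + 1/2)"
        using t by (simp add: power2_eq_square algebra_simps)
      then show ?thesis
        using t by (simp add: \<rho>_def field_simps)
    qed
    ultimately show ?thesis
      using assms(1) mult_left_mono[of "\<rho> powr q" \<rho> \<tau>] by (simp add: \<rho>_def flip: t_def)
  qed
qed

lemma prod_one_plus_div_le:
  fixes q :: real
  assumes q: "0 \<le> q" "q \<le> 1" and "t \<le> k" "1 \<le> k"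
  shows "(\<Prod>r\<in>{t<..k}. 1 + q / real r) \<le> (real k powr q + 1/2) / (real t + 1/2) powr q"
proof -
  have "real k + 1/2 = real k * (1 + 1 / (2 * real k))"
    using \<open>1 \<le> k\<close> by (simp add: field_simps)
  then have "(real k + 1/2) powr q = real k powr q * (1 + 1 / (2 * real k)) powr q"
    by (simp add: powr_mult)
  also have "\<dots> \<le> real k powr q * (1 + q / (2 * real k))"
    using one_plus_powr_le[of "1 / (2 * real k)" q] q by (intro mult_left_mono) auto
  also have "\<dots> = real k powr q + q * real k powr q / (2 * real k)"
    using \<open>1 \<le> k\<close> by (simp add: field_simps)
  also have "\<dots> \<le> real k powr q + 1/2"
  proof -
    have "q * real k powr q \<le> 1 * real k powr 1"
      using q \<open>1 \<le> k\<close> by (intro mult_mono powr_mono) auto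
    then show ?thesis
      using \<open>1 \<le> k\<close> by (simp add: field_simps)
  qed
  finally have "(real k + 1/2) powr q \<le> real k powr q + 1/2" .
  have "(\<Prod>r\<in>{t<..k}. 1 + q / real r) \<le> ((2 * real k + 1) / (2 * real t + 1)) powr q"
    using prod_one_plus_div_le_powr[OF q(1) \<open>t \<le> k\<close>] .
  also have "\<dots> = (real k + 1/2) powr q / (real t + 1/2) powr q"
    by (simp add: powr_divide field_simps)
  also have "\<dots> \<le> (real k powr q + 1/2) / (real t + 1/2) powr q"
    using \<open>(real k + 1/2) powr q \<le> real k powr q + 1/2\<close> by (simp add: divide_right_mono)
  finally show ?thesis .
qed

lemma balance_powr:
  fixes x y q :: real
  assumes "0 \<le> x" "0 \<le> y" "0 \<le> q"
  defines "\<tau> \<equiv> x powr (1 / (q + 1)) * y powr (q / (q + 1))"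
  shows "\<tau> * \<tau> powr q = x * y powr q"
proof -
  have "\<tau> * \<tau> powr q = \<tau> powr (1 + q)"
    by (simp add: \<tau>_def powr_add)
  also have "\<dots> = x powr (1 / (q + 1) * (1 + q)) * y powr (q / (q + 1) * (1 + q))"
    using assms by (simp add: \<tau>_def powr_mult powr_powr)
  also have "\<dots> = x * y powr q"
    using assms by (simp add: add.commute)
  finally show ?thesis .
qed

lemma exists_burn_in_le:
  fixes x q :: real and k :: nat
  assumes k: "1 \<le> k" and x: "0 \<le> x" and q: "0 \<le> q" "q \<le> 1"
  shows "\<exists>t\<le>k. 2 * real t + 2 * x * ((\<Prod>r\<in>{t<..k}. 1 + q / real r) - 1)
           \<le> 4 * (x powr (1 / (q + 1)) * real k powr (q / (q + 1)))"
proof -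
  define \<tau> where "\<tau> = x powr (1 / (q + 1)) * real k powr (q / (q + 1))"
  have \<tau>_nonneg: "0 \<le> \<tau>"
    by (simp add: \<tau>_def)
  have \<tau>_powr: "\<tau> * \<tau> powr q = x * real k powr q"
    using balance_powr[OF x _ q(1), of "real k"] by (simp add: \<tau>_def)
  show ?thesis
  proof (cases "real k \<le> \<tau>")
    case True
    then show ?thesis
      by (intro exI[of _ k]) (simp add: \<tau>_def[symmetric])
  next
    case False
    define t where "t = nat \<lfloor>\<tau>\<rfloor>"
    define s where "s = real t + 1/2"
    have "t \<le> k"
      using False \<tau>_nonneg unfolding t_def by linarith
    have "1/2 \<le> s powr q"
    proof -
      have "(1/2) powr 1 \<le> (1/2 :: real) powr q"
        using q by (intro powr_mono') auto
      also have "\<dots> \<le> s powr q"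
        using q by (intro powr_mono2) (auto simp: s_def)
      finally show ?thesis
        by simp
    qed
    have "x * (\<Prod>r\<in>{t<..k}. 1 + q / real r) \<le> x * ((real k powr q + 1/2) / s powr q)"
      using mult_left_mono[OF prod_one_plus_div_le[OF q \<open>t \<le> k\<close> k] x] by (simp add: s_def)
    also have "\<dots> = \<tau> * \<tau> powr q / s powr q + x / (2 * s powr q)"
      by (simp add: \<tau>_powr add_divide_distrib distrib_left)
    also have "\<dots> = \<tau> * (\<tau> / s) powr q + x / (2 * s powr q)"
      using \<tau>_nonneg by (simp add: powr_divide s_def)
    also have "\<dots> \<le> (2 * \<tau> - real t) + x"
      using floor_mul_powr_le[OF \<tau>_nonneg q] divide_left_mono[OF _ x, of 1 "2 * s powr q"]
        \<open>1/2 \<le> s powr q\<close>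
      by (intro add_mono) (simp_all add: s_def t_def)
    finally have "2 * real t + 2 * x * ((\<Prod>r\<in>{t<..k}. 1 + q / real r) - 1) \<le> 4 * \<tau>"
      by (simp add: algebra_simps)
    then show ?thesis
      using \<open>t \<le> k\<close> unfolding \<tau>_def by blast
  qed
qed

lemma idx_space_Suc:
  "idx_space n (Suc m) = (\<lambda>(a, u). u(Suc m := a)) ` ({..<n} \<times> idx_space n m)"
proof -
  have "{1..Suc m} = insert (Suc m) {1..m}"
    by auto
  then show ?thesis
    unfolding idx_space_def by (simp add: PiE_insert_eq)
qed

lemma card_idx_space: "card (idx_space n m) = n ^ m"
  unfolding idx_space_def by (simp add: card_PiE)

lemma idx_space_less: "u \<in> idx_space n m \<Longrightarrow> j \<in> {1..m} \<Longrightarrow> u j < n"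
  unfolding idx_space_def by auto

lemma expect_U_Suc:
  "expect_U n (Suc m) f = expect_U n m (\<lambda>u. (\<Sum>a<n. f (u(Suc m := a))) / real n)"
proof -
  have inj: "inj_on (\<lambda>(a, u). u(Suc m := a)) ({..<n} \<times> idx_space n m)"
    unfolding idx_space_def by (rule inj_combinator) auto
  have "(\<Sum>u\<in>idx_space n (Suc m). f u) = (\<Sum>(a, u)\<in>{..<n} \<times> idx_space n m. f (u(Suc m := a)))"
    unfolding idx_space_Suc by (subst sum.reindex[OF inj]) (simp add: case_prod_unfold)
  also have "\<dots> = (\<Sum>u\<in>idx_space n m. \<Sum>a<n. f (u(Suc m := a)))"
    by (simp add: sum.cartesian_product[symmetric] sum.swap[of _ "{..<n}"])
  finally show ?thesis
    unfolding expect_U_def by (simp add: sum_divide_distrib[symmetric] divide_divide_eq_left mult.commute)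
qed

lemma expect_U_mono:
  "(\<And>u. u \<in> idx_space n m \<Longrightarrow> f u \<le> g u) \<Longrightarrow> expect_U n m f \<le> expect_U n m g"
  unfolding expect_U_def by (intro divide_right_mono sum_mono) auto

lemma expect_U_add: "expect_U n m (\<lambda>u. f u + g u) = expect_U n m f + expect_U n m g"
  unfolding expect_U_def by (simp add: sum.distrib add_divide_distrib)

lemma expect_U_cmult: "expect_U n m (\<lambda>u. c * f u) = c * expect_U n m f"
  unfolding expect_U_def by (simp add: sum_distrib_left)

lemma expect_U_const: "0 < n \<Longrightarrow> expect_U n m (\<lambda>u. c) = c"
  unfolding expect_U_def by (simp add: card_idx_space)

lemma expect_U_sum:
  "expect_U n m (\<lambda>u. \<Sum>k\<in>K. f k u) = (\<Sum>k\<in>K. expect_U n m (f k))"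
  unfolding expect_U_def by (simp add: sum.swap[of _ K] sum_divide_distrib)

lemma expect_U_coordinate:
  assumes "0 < n" "j \<in> {1..m}"
  shows "expect_U n m (\<lambda>u. g (u j)) = (\<Sum>a<n. g a) / real n"
  using assms(2)
proof (induction m)
  case 0
  then show ?case by simp
next
  case (Suc m)
  show ?case
  proof (cases "j = Suc m")
    case True
    then show ?thesis
      using assms(1) by (simp add: expect_U_Suc expect_U_const)
  next
    case False
    then show ?thesis
      using assms(1) Suc by (simp add: expect_U_Suc)
  qed
qed

lemma DERIV_abs_le_if_Lipschitz_at:
  fixes f :: "real \<Rightarrow> real"
  assumes "(f has_field_derivative D) (at a)"
    and "\<And>y. \<bar>f y - f a\<bar> \<le> M * \<bar>y - a\<bar>"
  shows "\<bar>D\<bar> \<le> M"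
proof -
  have "((\<lambda>y. \<bar>(f y - f a) / (y - a)\<bar>) \<longlongrightarrow> \<bar>D\<bar>) (at a)"
    using assms(1) by (intro tendsto_rabs) (simp add: has_field_derivative_iff)
  moreover have "\<forall>\<^sub>F y in at a. \<bar>(f y - f a) / (y - a)\<bar> \<le> M"
    using assms(2) by (intro always_eventually allI eventually_at_filter[THEN iffD2])
      (simp add: abs_divide divide_le_eq)
  ultimately show ?thesis
    by (rule tendsto_upperbound) simp
qed

lemma norm_gradient_le_Lipschitz:
  fixes l :: "'a::euclidean_space \<Rightarrow> real"
  assumes grad: "(l has_derivative (\<lambda>h. g \<bullet> h)) (at w)"
    and lip: "\<And>v v'. \<bar>l v - l v'\<bar> \<le> L * norm (v - v')"
  shows "norm g \<le> L"
proof -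
  have "((\<lambda>s. w + s *\<^sub>R g) has_derivative (\<lambda>s. s *\<^sub>R g)) (at 0)"
    by (auto intro!: derivative_eq_intros)
  moreover have "(l has_derivative (\<lambda>h. g \<bullet> h)) (at (w + 0 *\<^sub>R g))"
    using grad by simp
  ultimately have "((\<lambda>s. l (w + s *\<^sub>R g)) has_derivative (\<lambda>s. (g \<bullet> g) * s)) (at 0)"
    by (auto dest: diff_chain_at simp: o_def mult.commute)
  then have "((\<lambda>s. l (w + s *\<^sub>R g)) has_field_derivative g \<bullet> g) (at 0)"
    by (simp add: has_field_derivative_def)
  moreover have "\<bar>l (w + y *\<^sub>R g) - l (w + 0 *\<^sub>R g)\<bar> \<le> (L * norm g) * \<bar>y - 0\<bar>" for y
    using lip[of "w + y *\<^sub>R g" w] by (simp add: mult_ac)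
  ultimately have "norm g * norm g \<le> L * norm g"
    by (auto dest!: DERIV_abs_le_if_Lipschitz_at simp: power2_norm_eq_inner[symmetric] power2_eq_square)
  moreover have "0 \<le> L"
  proof -
    obtain b :: 'a where "b \<in> Basis"
      using nonempty_Basis by blast
    then show ?thesis
      using lip[of b 0] norm_Basis[of b] by simp
  qed
  ultimately show ?thesis
    by (cases "g = 0") (auto simp: mult_le_cancel_right)
qed

lemma norm_proj_ball_le: "0 \<le> R \<Longrightarrow> norm (proj_ball R x) \<le> R"
  unfolding proj_ball_def using closest_point_in_set[of "cball 0 R" x] by auto

lemma proj_ball_Lipschitz: "0 \<le> R \<Longrightarrow> norm (proj_ball R x - proj_ball R y) \<le> norm (x - y)"
  unfolding proj_ball_def using closest_point_lipschitz[of "cball 0 R" x y]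
  by (auto simp: dist_norm)

lemma norm_psgd_le: "0 \<le> R \<Longrightarrow> 1 \<le> t \<Longrightarrow> norm (psgd gr eta R w0 S u t) \<le> R"
  by (cases t) (auto simp: norm_proj_ball_le)

lemma psgd_eq_if_samples_agree:
  "(\<And>j. j \<in> {1..t} \<Longrightarrow> S ! u j = S' ! u j) \<Longrightarrow> psgd gr eta R w0 S u t = psgd gr eta R w0 S' u t"
  by (induction t) auto

locale psgd_coupling =
  fixes gradl :: "'a::euclidean_space \<Rightarrow> 'z \<Rightarrow> 'a" and eta :: "nat \<Rightarrow> real"
    and R L G q :: real and w0 :: 'a and n T :: nat and S S' :: "'z list"
  assumes glip: "\<And>w w' z. norm (gradl w z - gradl w' z) \<le> G * norm (w - w')"
    and gbound: "\<And>w z. norm (gradl w z) \<le> L"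
    and G_pos: "0 < G" and R_pos: "0 < R"
    and q_nonneg: "0 \<le> q" and q_le_1: "q \<le> 1"
    and eta_nonneg: "\<And>k. 1 \<le> k \<Longrightarrow> 0 \<le> eta k"
    and eta_G_le: "\<And>k. 1 \<le> k \<Longrightarrow> eta k * G \<le> q / real k"
    and n_pos: "0 < n"
begin

abbreviation dev :: "(nat \<Rightarrow> nat) \<Rightarrow> nat \<Rightarrow> real" where
  "dev u t \<equiv> norm (psgd gradl eta R w0 S u t - psgd gradl eta R w0 S' u t)"

abbreviation Diff :: "nat set" where
  "Diff \<equiv> {j. j < n \<and> S ! j \<noteq> S' ! j}"

abbreviation hits :: "nat \<Rightarrow> (nat \<Rightarrow> nat) \<Rightarrow> bool" where
  "hits t0 u \<equiv> \<exists>j\<in>{1..t0}. u j \<in> Diff"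

lemma L_nonneg: "0 \<le> L"
  using gbound norm_ge_zero order_trans by blast

lemma dev_le:
  assumes "1 \<le> t"
  shows "dev u t \<le> 2 * R"
proof -
  have "norm (psgd gradl eta R w0 S u t) \<le> R" "norm (psgd gradl eta R w0 S' u t) \<le> R"
    by (rule norm_psgd_le[OF less_imp_le[OF R_pos] assms])+
  then show ?thesis
    using norm_triangle_ineq4[of "psgd gradl eta R w0 S u t" "psgd gradl eta R w0 S' u t"] by linarith
qed

lemma dev_eq_0_if_not_hits:
  assumes "u \<in> idx_space n T" "t0 \<le> T" "\<not> hits t0 u"
  shows "dev u t0 = 0"
proof -
  have "S ! u j = S' ! u j" if "j \<in> {1..t0}" for j
    using assms that idx_space_less[of u n T j] by auto
  then have "psgd gradl eta R w0 S u t0 = psgd gradl eta R w0 S' u t0"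
    by (rule psgd_eq_if_samples_agree)
  then show ?thesis
    by simp
qed

lemma norm_gradl_diff_le:
  "a < n \<Longrightarrow> norm (gradl x (S ! a) - gradl x' (S' ! a)) \<le> G * norm (x - x') + 2 * L * indicator Diff a"
proof (cases "a \<in> Diff")
  case True
  have "norm (gradl x (S ! a) - gradl x' (S' ! a)) \<le> 2 * L"
    using norm_triangle_ineq4[of "gradl x (S ! a)" "gradl x' (S' ! a)"]
      gbound[of x "S ! a"] gbound[of x' "S' ! a"] by simp
  then show ?thesis
    using True G_pos by (simp add: add_increasing)
qed (use glip in auto)

lemma dev_Suc_le:
  assumes "u (Suc t) < n"
  shows "dev u (Suc t) \<le> (1 + eta (Suc t) * G) * dev u t + 2 * eta (Suc t) * L * indicator Diff (u (Suc t))"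
proof -
  define x where "x = psgd gradl eta R w0 S u t"
  define x' where "x' = psgd gradl eta R w0 S' u t"
  define \<eta> where "\<eta> = eta (Suc t)"
  define a where "a = u (Suc t)"
  have "0 \<le> \<eta>"
    unfolding \<eta>_def using eta_nonneg by simp
  have "dev u (Suc t) \<le> norm ((x - \<eta> *\<^sub>R gradl x (S ! a)) - (x' - \<eta> *\<^sub>R gradl x' (S' ! a)))"
    using proj_ball_Lipschitz[OF less_imp_le[OF R_pos]] by (simp add: x_def x'_def \<eta>_def a_def)
  also have "\<dots> = norm ((x - x') - \<eta> *\<^sub>R (gradl x (S ! a) - gradl x' (S' ! a)))"
    by (simp add: algebra_simps)
  also have "\<dots> \<le> norm (x - x') + \<eta> * norm (gradl x (S ! a) - gradl x' (S' ! a))"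
    using norm_triangle_ineq4 \<open>0 \<le> \<eta>\<close> by (metis abs_of_nonneg norm_scaleR)
  also have "\<dots> \<le> norm (x - x') + \<eta> * (G * norm (x - x') + 2 * L * indicator Diff a)"
    using norm_gradl_diff_le assms \<open>0 \<le> \<eta>\<close> by (simp add: a_def mult_left_mono)
  finally show ?thesis
    by (simp add: x_def x'_def \<eta>_def a_def algebra_simps)
qed

lemma dev_not_hits_Suc_le:
  assumes "u (Suc t) < n"
  shows "(if hits t0 u then 0 else dev u (Suc t))
           \<le> (1 + eta (Suc t) * G) * (if hits t0 u then 0 else dev u t)
               + 2 * eta (Suc t) * L * indicator Diff (u (Suc t))"
proof (cases "hits t0 u")
  case True
  show ?thesis
    unfolding if_P[OF True] using eta_nonneg[of "Suc t"] L_nonneg by simp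
next
  case False
  show ?thesis
    unfolding if_not_P[OF False] using dev_Suc_le[of u t] assms by simp
qed

lemma expect_indicator_Diff:
  assumes "j \<in> {1..T}"
  shows "expect_U n T (\<lambda>u. indicator Diff (u j)) = card Diff / n"
proof -
  have "(\<Sum>a<n. indicator Diff a) = real (card Diff)"
    by (simp add: indicator_def lessThan_def Collect_conj_eq[symmetric])
  then show ?thesis
    using n_pos assms by (simp add: expect_U_coordinate)
qed

lemma expect_hits_le:
  assumes "t0 \<le> T"
  shows "expect_U n T (\<lambda>u. of_bool (hits t0 u)) \<le> real t0 * (card Diff / n)"
proof -
  have "expect_U n T (\<lambda>u. of_bool (hits t0 u)) \<le> expect_U n T (\<lambda>u. \<Sum>j\<in>{1..t0}. indicator Diff (u j))"
  proof (rule expect_U_mono)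
    fix u
    show "of_bool (hits t0 u) \<le> (\<Sum>j\<in>{1..t0}. indicator Diff (u j) :: real)"
    proof (cases "hits t0 u")
      case True
      then obtain j where "j \<in> {1..t0}" "u j \<in> Diff"
        by blast
      then have "indicator Diff (u j) \<le> (\<Sum>j\<in>{1..t0}. indicator Diff (u j) :: real)"
        by (intro member_le_sum) auto
      then show ?thesis
        using \<open>u j \<in> Diff\<close> True by simp
    qed (simp add: sum_nonneg)
  qed
  also have "\<dots> = real t0 * (card Diff / n)"
    using assms by (simp add: expect_U_sum expect_indicator_Diff)
  finally show ?thesis .
qed

lemma expect_dev_not_hits_le:
  assumes "t0 \<le> t" "t \<le> T"
  shows "expect_U n T (\<lambda>u. if hits t0 u then 0 else dev u t)
           \<le> 2 * (card Diff / n) * L / G * ((\<Prod>r\<in>{t0<..t}. 1 + q / real r) - 1)"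
  using assms
proof (induction t rule: dec_induct)
  case base
  have "expect_U n T (\<lambda>u. if hits t0 u then 0 else dev u t0) \<le> expect_U n T (\<lambda>u. 0)"
    by (rule expect_U_mono) (use dev_eq_0_if_not_hits base in auto)
  then show ?case
    using n_pos by (simp add: expect_U_const)
next
  case (step t)
  define \<eta> where "\<eta> = eta (Suc t)"
  define c where "c = 2 * (card Diff / n) * L / G"
  define Q where "Q = (\<Prod>r\<in>{t0<..t}. 1 + q / real r)"
  have \<eta>: "0 \<le> \<eta>" "\<eta> * G \<le> q / real (Suc t)"
    using eta_nonneg[of "Suc t"] eta_G_le[of "Suc t"] by (simp_all add: \<eta>_def)
  have "0 \<le> c"
    using L_nonneg G_pos by (simp add: c_def)
  have "1 \<le> Q"
    using q_nonneg by (auto simp: Q_def intro: prod_ge_1)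
  have "expect_U n T (\<lambda>u. if hits t0 u then 0 else dev u (Suc t))
      \<le> expect_U n T (\<lambda>u. (1 + \<eta> * G) * (if hits t0 u then 0 else dev u t)
                           + 2 * \<eta> * L * indicator Diff (u (Suc t)))"
    unfolding \<eta>_def
    by (intro expect_U_mono dev_not_hits_Suc_le idx_space_less) (use step.prems in auto)
  also have "\<dots> = (1 + \<eta> * G) * expect_U n T (\<lambda>u. if hits t0 u then 0 else dev u t)
                  + 2 * \<eta> * L * (card Diff / n)"
    using step.prems by (simp add: expect_U_add expect_U_cmult expect_indicator_Diff)
  also have "\<dots> \<le> (1 + \<eta> * G) * (c * (Q - 1)) + 2 * \<eta> * L * (card Diff / n)"
    using step.IH step.prems \<eta> G_pos by (intro add_right_mono mult_left_mono) (simp_all add: c_def Q_def)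
  also have "\<dots> = c * ((1 + \<eta> * G) * Q - 1)"
    using G_pos n_pos by (simp add: c_def field_simps)
  also have "\<dots> \<le> c * ((1 + q / real (Suc t)) * Q - 1)"
    using \<eta> \<open>0 \<le> c\<close> \<open>1 \<le> Q\<close> by (intro mult_left_mono diff_right_mono mult_right_mono) auto
  also have "(1 + q / real (Suc t)) * Q = (\<Prod>r\<in>{t0<..Suc t}. 1 + q / real r)"
  proof -
    have "{t0<..Suc t} = insert (Suc t) {t0<..t}"
      using step.hyps by auto
    then show ?thesis
      by (simp add: Q_def)
  qed
  finally show ?case
    by (simp add: c_def)
qed

lemma expect_dev_le:
  assumes "1 \<le> k" "k \<le> T" "t0 \<le> k"
  shows "expect_U n T (\<lambda>u. dev u k)
           \<le> R * (card Diff / n) * (2 * real t0 + 2 * (L / (G * R)) * ((\<Prod>r\<in>{t0<..k}. 1 + q / real r) - 1))"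
proof -
  have rearrange: "2 * p * L / G * (P - 1) + 2 * R * (real t0 * p) = R * p * (2 * real t0 + 2 * (L / (G * R)) * (P - 1))"
    for p P :: real
    using R_pos G_pos by (simp add: field_simps)
  have "expect_U n T (\<lambda>u. dev u k)
      \<le> expect_U n T (\<lambda>u. (if hits t0 u then 0 else dev u k) + 2 * R * of_bool (hits t0 u))"
    by (rule expect_U_mono) (use dev_le[OF assms(1)] in auto)
  also have "\<dots> = expect_U n T (\<lambda>u. if hits t0 u then 0 else dev u k)
                  + 2 * R * expect_U n T (\<lambda>u. of_bool (hits t0 u))"
    by (simp add: expect_U_add expect_U_cmult)
  also have "\<dots> \<le> 2 * (card Diff / n) * L / G * ((\<Prod>r\<in>{t0<..k}. 1 + q / real r) - 1)
                  + 2 * R * (real t0 * (card Diff / n))"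
    using expect_dev_not_hits_le[OF assms(3,2)] expect_hits_le[of t0] assms R_pos
    by (intro add_mono mult_left_mono) auto
  also have "\<dots> = R * (card Diff / n) * (2 * real t0 + 2 * (L / (G * R)) * ((\<Prod>r\<in>{t0<..k}. 1 + q / real r) - 1))"
    by (rule rearrange)
  finally show ?thesis .
qed

lemma expect_dev_le_powr:
  assumes "1 \<le> k" "k \<le> T"
  shows "expect_U n T (\<lambda>u. dev u k)
           \<le> 4 * R * (card Diff / n) * ((L / (G * R)) powr (1 / (q + 1)) * real k powr (q / (q + 1)))"
proof -
  have "0 \<le> L / (G * R)"
    using L_nonneg G_pos R_pos by simp
  then obtain t0 where "t0 \<le> k" and t0: "2 * real t0 + 2 * (L / (G * R)) * ((\<Prod>r\<in>{t0<..k}. 1 + q / real r) - 1)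
      \<le> 4 * ((L / (G * R)) powr (1 / (q + 1)) * real k powr (q / (q + 1)))"
    using exists_burn_in_le[OF assms(1) _ q_nonneg q_le_1] by blast
  have "expect_U n T (\<lambda>u. dev u k)
      \<le> R * (card Diff / n) * (2 * real t0 + 2 * (L / (G * R)) * ((\<Prod>r\<in>{t0<..k}. 1 + q / real r) - 1))"
    using expect_dev_le[OF assms \<open>t0 \<le> k\<close>] .
  also have "\<dots> \<le> R * (card Diff / n) * (4 * ((L / (G * R)) powr (1 / (q + 1)) * real k powr (q / (q + 1))))"
    using t0 R_pos by (intro mult_left_mono) auto
  finally show ?thesis
    by (simp add: mult_ac)
qed

end

lemma Lipschitz_loss_closest_point_le:
  fixes w w' :: "'k \<Rightarrow> 'a::euclidean_space"
  assumes lip: "\<And>v v'. \<bar>f v - f v'\<bar> \<le> L * norm (v - v')" and "0 \<le> L"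
    and "finite K" "k \<in> K"
  shows "\<bar>f (w k) - f (closest_point (w' ` K) (w k))\<bar> \<le> L * (\<Sum>j\<in>K. norm (w j - w' j))"
proof -
  have "\<bar>f (w k) - f (closest_point (w' ` K) (w k))\<bar> \<le> L * dist (w k) (closest_point (w' ` K) (w k))"
    using lip by (simp add: dist_norm)
  also have "\<dots> \<le> L * dist (w k) (w' k)"
    using assms by (intro mult_left_mono closest_point_le finite_imp_closed) auto
  also have "\<dots> \<le> L * (\<Sum>j\<in>K. norm (w j - w' j))"
    using assms by (intro mult_left_mono) (auto simp: dist_norm intro!: member_le_sum)
  finally show ?thesis .
qed

lemma trajectory_stable_if_expect_dev_le:
  fixes l :: "'a::euclidean_space \<Rightarrow> 'z \<Rightarrow> real" and w :: "'z list \<Rightarrow> (nat \<Rightarrow> nat) \<Rightarrow> 'k \<Rightarrow> 'a"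
  assumes lip: "\<And>v v' z. \<bar>l v z - l v' z\<bar> \<le> L * norm (v - v')" and "0 \<le> L" and "finite K"
    and dev: "\<And>S S'. length S = n \<Longrightarrow> length S' = n \<Longrightarrow>
      L * (\<Sum>k\<in>K. expect_U n T (\<lambda>u. norm (w S u k - w S' u k))) \<le> \<beta> * real (ndiff S S')"
  shows "trajectory_stable n (idx_space n T) (expect_U n T) l (\<lambda>S u. w S u ` K) \<beta>"
  unfolding trajectory_stable_def
proof (intro allI impI exI[of _ "\<lambda>W v. closest_point W v"] conjI)
  fix \<omega> :: "'a set \<Rightarrow> 'z list \<Rightarrow> 'a" and S :: "'z list" and u v
  assume "\<forall>S u. length S = n \<longrightarrow> u \<in> idx_space n T \<longrightarrow> \<omega> (w S u ` K) S \<in> w S u ` K"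
    and "length S = n" "u \<in> idx_space n T"
  then have "w S u ` K \<noteq> {}"
    by blast
  then show "closest_point (w S u ` K) v \<in> w S u ` K"
    using \<open>finite K\<close> by (intro closest_point_in_set finite_imp_closed) auto
next
  fix J :: nat and \<omega> :: "'a set \<Rightarrow> 'z list \<Rightarrow> 'a" and z :: 'z and S S' :: "'z list"
  assume \<omega>: "\<forall>S u. length S = n \<longrightarrow> u \<in> idx_space n T \<longrightarrow> \<omega> (w S u ` K) S \<in> w S u ` K"
    and S: "length S = n" "length S' = n" "ndiff S S' = J"
  have pointwise: "\<bar>l (\<omega> (w S u ` K) S) z - l (closest_point (w S' u ` K) (\<omega> (w S u ` K) S)) z\<bar>
      \<le> L * (\<Sum>k\<in>K. norm (w S u k - w S' u k))" if "u \<in> idx_space n T" for u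
  proof -
    obtain k where "k \<in> K" and "\<omega> (w S u ` K) S = w S u k"
      using \<omega> S \<open>u \<in> idx_space n T\<close> by blast
    then show ?thesis
      using Lipschitz_loss_closest_point_le[OF lip \<open>0 \<le> L\<close> \<open>finite K\<close>] by simp
  qed
  have "expect_U n T (\<lambda>u. \<bar>l (\<omega> (w S u ` K) S) z - l (closest_point (w S' u ` K) (\<omega> (w S u ` K) S)) z\<bar>)
      \<le> expect_U n T (\<lambda>u. L * (\<Sum>k\<in>K. norm (w S u k - w S' u k)))"
    by (rule expect_U_mono) (rule pointwise)
  also have "\<dots> = L * (\<Sum>k\<in>K. expect_U n T (\<lambda>u. norm (w S u k - w S' u k)))"
    by (simp add: expect_U_cmult expect_U_sum)
  also have "\<dots> \<le> \<beta> * real J"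
    using dev[OF S(1,2)] unfolding S(3) .
  finally show "expect_U n T (\<lambda>u. \<bar>l (\<omega> (w S u ` K) S) z - l (closest_point (w S' u ` K) (\<omega> (w S u ` K) S)) z\<bar>)
      \<le> \<beta> * real J" .
qed

lemma trajectory_stable_mono:
  fixes W :: "'z list \<Rightarrow> 'u \<Rightarrow> 'a set"
  assumes stable: "trajectory_stable n Us EU l W \<beta>" and "\<beta> \<le> \<beta>'"
  shows "trajectory_stable n Us EU l W \<beta>'"
  unfolding trajectory_stable_def
proof (intro allI impI)
  fix J :: nat and \<omega> :: "'a set \<Rightarrow> 'z list \<Rightarrow> 'a"
  assume "1 \<le> J" "\<forall>S u. length S = n \<longrightarrow> u \<in> Us \<longrightarrow> \<omega> (W S u) S \<in> W S u"
  then obtain \<omega>' where sel: "\<forall>S u w. length S = n \<longrightarrow> u \<in> Us \<longrightarrow> \<omega>' (W S u) w \<in> W S u"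
    and bound: "\<And>z S S'. length S = n \<Longrightarrow> length S' = n \<Longrightarrow> ndiff S S' = J \<Longrightarrow>
      EU (\<lambda>u. \<bar>l (\<omega> (W S u) S) z - l (\<omega>' (W S' u) (\<omega> (W S u) S)) z\<bar>) \<le> \<beta> * real J"
    using stable unfolding trajectory_stable_def by blast
  have "\<beta> * real J \<le> \<beta>' * real J"
    using \<open>\<beta> \<le> \<beta>'\<close> by (simp add: mult_right_mono)
  then show "\<exists>\<omega>'. (\<forall>S u w. length S = n \<longrightarrow> u \<in> Us \<longrightarrow> \<omega>' (W S u) w \<in> W S u) \<and>
      (\<forall>z S S'. length S = n \<longrightarrow> length S' = n \<longrightarrow> ndiff S S' = J \<longrightarrow>
        EU (\<lambda>u. \<bar>l (\<omega> (W S u) S) z - l (\<omega>' (W S' u) (\<omega> (W S u) S)) z\<bar>) \<le> \<beta>' * real J)"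
    using sel bound order_trans by blast
qed

theorem trajectory_stable_psgd:
  fixes l :: "'a::euclidean_space \<Rightarrow> 'z \<Rightarrow> real" and gradl :: "'a \<Rightarrow> 'z \<Rightarrow> 'a"
  assumes lip: "\<And>w w' z. \<bar>l w z - l w' z\<bar> \<le> L * norm (w - w')"
    and glip: "\<And>w w' z. norm (gradl w z - gradl w' z) \<le> G * norm (w - w')"
    and gbound: "\<And>w z. norm (gradl w z) \<le> L"
    and "0 < G" "0 < R" "0 \<le> q" "q \<le> 1" "0 < n"
    and "\<And>k. 1 \<le> k \<Longrightarrow> 0 \<le> eta k"
    and "\<And>k. 1 \<le> k \<Longrightarrow> eta k * G \<le> q / real k"
  shows "trajectory_stable n (idx_space n T) (expect_U n T) l (traj gradl eta R w0 T)
           (4 * L * R / n * (L / (G * R)) powr (1 / (q + 1)) * (\<Sum>k = 1..T. real k powr (q / (q + 1))))"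
  unfolding traj_def
proof (rule trajectory_stable_if_expect_dev_le[OF lip _ finite_atLeastAtMost])
  show "0 \<le> L"
    using gbound norm_ge_zero order_trans by blast
  fix S S' :: "'z list"
  assume "length S = n"
  interpret psgd_coupling gradl eta R L G q w0 n T S S'
    using assms by unfold_locales auto
  have "L * (\<Sum>k = 1..T. expect_U n T (\<lambda>u. dev u k))
      \<le> L * (\<Sum>k = 1..T. 4 * R * (card Diff / n) * ((L / (G * R)) powr (1 / (q + 1)) * real k powr (q / (q + 1))))"
    using expect_dev_le_powr L_nonneg by (intro mult_left_mono sum_mono) auto
  also have "\<dots> = L * (4 * R * (card Diff / n) * (L / (G * R)) powr (1 / (q + 1))
                       * (\<Sum>k = 1..T. real k powr (q / (q + 1))))"
    by (simp only: sum_distrib_left mult.assoc)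
  also have "\<dots> = 4 * L * R / n * (L / (G * R)) powr (1 / (q + 1))
                  * (\<Sum>k = 1..T. real k powr (q / (q + 1))) * card Diff"
    by (simp add: field_simps)
  also have "card Diff = ndiff S S'"
    using \<open>length S = n\<close> by (simp add: ndiff_def)
  finally show "L * (\<Sum>k = 1..T. expect_U n T (\<lambda>u. dev u k))
      \<le> 4 * L * R / n * (L / (G * R)) powr (1 / (q + 1))
          * (\<Sum>k = 1..T. real k powr (q / (q + 1))) * real (ndiff S S')" .
qed

theorem corollary1:
  fixes l :: "'a::euclidean_space \<Rightarrow> 'z \<Rightarrow> real"
    and gradl :: "'a \<Rightarrow> 'z \<Rightarrow> 'a"
    and L G R c :: real and n T :: nat
    and eta :: "nat \<Rightarrow> real" and w0 :: 'a
  assumes grad: "\<And>w z. ((\<lambda>v. l v z) has_derivative (\<lambda>h. gradl w z \<bullet> h)) (at w)"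
    and lip: "\<And>w w' z. \<bar>l w z - l w' z\<bar> \<le> L * norm (w - w')"
    and glip: "\<And>w w' z. norm (gradl w z - gradl w' z) \<le> G * norm (w - w')"
    and G_pos: "G > 0"
    and R_pos: "R > 0"
    and c_pos: "c > 0" and c_lt: "c < 1 / G"
    and eta_nonneg: "\<And>k. k \<ge> 1 \<Longrightarrow> eta k \<ge> 0"
    and eta_le: "\<And>k. k \<ge> 1 \<Longrightarrow> eta k \<le> c / real k"
    and n_ge: "n \<ge> 2"
  shows "trajectory_stable n (idx_space n T) (expect_U n T) l
           (traj gradl eta R w0 T)
           (4 * L * R / (real n - 1) * (L / (G * R)) powr (1 / (G * c + 1))
              * (\<Sum>k = 1..T. real k powr (G * c / (G * c + 1))))"
proof -
  define q where "q = G * c"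
  have q: "0 \<le> q" "q \<le> 1"
    using G_pos c_pos c_lt by (simp_all add: q_def field_simps)
  have gbound: "norm (gradl w z) \<le> L" for w z
    using norm_gradient_le_Lipschitz[OF grad lip] .
  have eta_G_le: "eta k * G \<le> q / real k" if "1 \<le> k" for k
    using mult_right_mono[OF eta_le[OF that] less_imp_le[OF G_pos]] by (simp add: q_def mult.commute)
  have stable: "trajectory_stable n (idx_space n T) (expect_U n T) l (traj gradl eta R w0 T)
      (4 * L * R / n * (L / (G * R)) powr (1 / (q + 1)) * (\<Sum>k = 1..T. real k powr (q / (q + 1))))"
    using n_ge by (intro trajectory_stable_psgd[OF lip glip gbound G_pos R_pos q _ eta_nonneg eta_G_le]) auto
  have "0 \<le> L"
    using gbound norm_ge_zero order_trans by blast
  then have "4 * L * R / n \<le> 4 * L * R / (real n - 1)"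
    using n_ge R_pos by (intro divide_left_mono) auto
  then show ?thesis
    unfolding q_def[symmetric]
    by (rule trajectory_stable_mono[OF stable mult_right_mono[OF mult_right_mono]]) (auto intro: sum_nonneg)
qed

end
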